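(* Let $\mathcal{M}$ and $\mathcal{M}'$ be MRTA instances with the same robots $R$ and tasks $T$, whose cost functions $c$ and $c'$ are injective on the edge set $E$ of the robot-task graph and differ only in the cost of a single edge $e$. Let $\textsc{Auction}(\mathcal{M})=(W=(w_k),a)$ and let $U=(u_k)$ denote the edges with second-best bids on $\textsc{Auction}(\mathcal{M})$. Then $\textsc{Assign}(\mathcal{M}')=\textsc{Assign}(\mathcal{M})$ if either (1) $e$ does not appear in $W$ and $c'(e)>\max_{k\in B_e}c(w_k)$; (2) $e=w_K\in W$ with $|B_e|=1$ and $c(u_K)>c'(e)\ge0$; or (3) $e=w_K\in W$ with $|B_e|>1$ and $c(u_K)>c'(e)>\max_{k\in B_e\setminus\{K\}}c(w_k)$.
   Context: $R$ (robots) and $T$ (tasks) are finite disjoint sets with $R\neq\emptyset$, $|R\sqcup T|\ge3$. The robot-task graph has vertex set $R\sqcup T$, edge set $E$ consisting of all 2-element subsets of $R\sqcup T$, and non-negative edge costs $c:E\to\mathbb{R}_+$; injective means distinct edges have distinct costs. $\textsc{Auction}(\mathcal{M})$: set $A=\emptyset$ and $a(r)=0$ for all $r\in R$. For $k=1,\dots,|T|$: let $w_k=\{s,t\}$ be the edge with $s\in R\cup A$, $t\in T\setminus A$ minimising $c(\{s,t\})$; set $a(t)=k$ and $A\leftarrow A\cup\{t\}$. Output $W=(w_1,\dots,w_{|T|})$ and $a:R\sqcup T\to\{0,\dots,|T|\}$. $\textsc{DFShortcut}$: the edges of $W$ form a forest each of whose components contains exactly one robot. For each robot $r$ let $V(r)$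 be the vertex set of its component; start with $P(r)=(r)$ and, while $P(r)$ does not contain all of $V(r)$, scan the vertices of $P(r)$ from last to first, and at the first vertex $t$ having a $W$-neighbour not yet in $P(r)$, append the such neighbour $s$ with smallest $a(s)$. Output the plan $\{P(r):r\in R\}$. $\textsc{Assign}(\mathcal{M})$ is the result of applying $\textsc{DFShortcut}$ to $\textsc{Auction}(\mathcal{M})$. For $e=\{x,y\}$, $B_e=\{k\in\mathbb{Z}:\min(a(x),a(y))<k\le\max(a(x),a(y))\}$. The edge with second-best bid in round $k$ is the edge $u_k\ne w_k$ with $k\in B_{u_k}$ such that $c(u_k)\le c(f)$ for all edges $f\ne w_k$ with $k\in B_f$. *)

theory Defs
  imports Complex_Main
begin

text \<open>Vertices of the robot-task graph live in a type 'v; robots R and tasks T are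
finite disjoint subsets. Edges are 2-element subsets; costs are functions on 'v set
(only their values on edges matter).\<close>

definition edges :: "'v set \<Rightarrow> 'v set set" where
  "edges V = {{x, y} | x y. x \<in> V \<and> y \<in> V \<and> x \<noteq> y}"

definition cand :: "'v set \<Rightarrow> 'v set \<Rightarrow> 'v set \<Rightarrow> 'v set set" where
  "cand R T A = {{s, t} | s t. s \<in> R \<union> A \<and> t \<in> T - A}"

text \<open>State after k rounds: list of winning edges and list of assigned tasks (in order).\<close>
primrec auction_st :: "('v set \<Rightarrow> real) \<Rightarrow> 'v set \<Rightarrow> 'v set \<Rightarrow> nat \<Rightarrow> 'v set list \<times> 'v list" where
  "auction_st c R T 0 = ([], [])"
| "auction_st c R T (Suc k) =
     (let W = fst (auction_st c R T k); L = snd (auction_st c R T k);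
          w = (ARG_MIN c f. f \<in> cand R T (set L));
          t = (THE t. t \<in> w \<and> t \<in> T - set L)
      in (W @ [w], L @ [t]))"

definition auction_W :: "('v set \<Rightarrow> real) \<Rightarrow> 'v set \<Rightarrow> 'v set \<Rightarrow> 'v set list" where
  "auction_W c R T = fst (auction_st c R T (card T))"

definition auction_a :: "('v set \<Rightarrow> real) \<Rightarrow> 'v set \<Rightarrow> 'v set \<Rightarrow> 'v \<Rightarrow> nat" where
  "auction_a c R T x =
     (let L = snd (auction_st c R T (card T))
      in if x \<in> set L then Suc (LEAST i. i < length L \<and> L ! i = x) else 0)"

text \<open>w_k for k = 1..|T|.\<close>
definition auction_w :: "('v set \<Rightarrow> real) \<Rightarrow> 'v set \<Rightarrow> 'v set \<Rightarrow> nat \<Rightarrow> 'v set" where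
  "auction_w c R T k = auction_W c R T ! (k - 1)"

definition bid_rounds :: "('v \<Rightarrow> nat) \<Rightarrow> 'v set \<Rightarrow> nat set" where
  "bid_rounds a e = {k. \<exists>x y. e = {x, y} \<and> min (a x) (a y) < k \<and> k \<le> max (a x) (a y)}"

definition second_best :: "('v set \<Rightarrow> real) \<Rightarrow> 'v set \<Rightarrow> 'v set \<Rightarrow> nat \<Rightarrow> 'v set" where
  "second_best c R T k =
     (ARG_MIN c f. f \<in> edges (R \<union> T) \<and> f \<noteq> auction_w c R T k
                   \<and> k \<in> bid_rounds (auction_a c R T) f)"

definition comp :: "'v set list \<Rightarrow> 'v \<Rightarrow> 'v set" where
  "comp W r = {v. (r, v) \<in> {(x, y). {x, y} \<in> set W}\<^sup>*}"

definition dfs_step :: "'v set list \<Rightarrow> ('v \<Rightarrow> nat) \<Rightarrow> 'v set \<Rightarrow> 'v list \<Rightarrow> 'v list" where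
  "dfs_step W a V P =
     (if V \<subseteq> set P then P
      else let cs = filter (\<lambda>t. \<exists>s. {t, s} \<in> set W \<and> s \<notin> set P) P
           in if cs = [] then P
              else let t = last cs
                   in P @ [ARG_MIN a s. {t, s} \<in> set W \<and> s \<notin> set P])"

definition dfs_path :: "'v set list \<Rightarrow> ('v \<Rightarrow> nat) \<Rightarrow> 'v \<Rightarrow> 'v list" where
  "dfs_path W a r = (dfs_step W a (comp W r) ^^ length W) [r]"

definition dfshortcut :: "'v set \<Rightarrow> 'v set list \<Rightarrow> ('v \<Rightarrow> nat) \<Rightarrow> 'v \<Rightarrow> 'v list" where
  "dfshortcut R W a = (\<lambda>r. if r \<in> R then dfs_path W a r else [])"

definition assign :: "('v set \<Rightarrow> real) \<Rightarrow> 'v set \<Rightarrow> 'v set \<Rightarrow> 'v \<Rightarrow> 'v list" where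
  "assign c R T = dfshortcut R (auction_W c R T) (auction_a c R T)"

end

theory Submission
  imports Defs
begin

text \<open>Every candidate edge f of auction round k satisfies k \<in> B_f. Hence, under each of the
  three hypotheses, the winner w_k of every round stays the cheapest candidate for c':
  a candidate other than e keeps its cost; if e is a candidate but e \<noteq> w_k, then
  c'(e) exceeds c(w_k); and if e = w_k, every other candidate costs at least c(u_k) > c'(e).
  So the auction under c' runs exactly as under c, and DFShortcut receives the same input.\<close>

lemma length_auction_st:
  "length (fst (auction_st c R T k)) = k" "length (snd (auction_st c R T k)) = k"
  by (induction k) (simp_all add: Let_def)

lemma auction_st_take:
  assumes "k \<le> m"
  shows "auction_st c R T k =
    (take k (fst (auction_st c R T m)), take k (snd (auction_st c R T m)))"
  using assms
proof (induction m)
  case 0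
  then show ?case by simp
next
  case (Suc m)
  show ?case
  proof (cases "k = Suc m")
    case True
    then show ?thesis using length_auction_st[of c R T "Suc m"] by simp
  next
    case False
    with Suc have "k \<le> m" by simp
    then show ?thesis using Suc.IH length_auction_st[of c R T m] by (simp add: Let_def)
  qed
qed

lemma finite_edges: "finite V \<Longrightarrow> finite (edges V)"
  by (rule finite_subset[of _ "Pow V"]) (auto simp: edges_def)

lemma cand_subset_edges: "A \<subseteq> T \<Longrightarrow> R \<inter> T = {} \<Longrightarrow> cand R T A \<subseteq> edges (R \<union> T)"
  unfolding cand_def edges_def by blast

lemma second_best_le:
  assumes "finite (R \<union> T)" "f \<in> edges (R \<union> T)" "f \<noteq> auction_w c R T k"
    and "k \<in> bid_rounds (auction_a c R T) f"
  shows "c (second_best c R T k) \<le> c f"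
proof -
  let ?S = "{f \<in> edges (R \<union> T). f \<noteq> auction_w c R T k \<and> k \<in> bid_rounds (auction_a c R T) f}"
  have "finite ?S" using finite_edges[OF assms(1)] by simp
  moreover have "f \<in> ?S" using assms(2-4) by simp
  ultimately show ?thesis
    using arg_min_least[of ?S f c] unfolding second_best_def arg_min_on_def by auto
qed

locale mrta =
  fixes R T :: "'v set"
  assumes finite_robots: "finite R" and finite_tasks: "finite T"
    and robots_tasks_disjoint: "R \<inter> T = {}" and robots_nonempty: "R \<noteq> {}"
begin

text \<open>assigned c k lists the set A of tasks assigned in the first k rounds, in order of
  assignment; round_cand c k is the set of candidate edges of round k + 1.\<close>

abbreviation assigned :: "('v set \<Rightarrow> real) \<Rightarrow> nat \<Rightarrow> 'v list" where
  "assigned c k \<equiv> snd (auction_st c R T k)"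

abbreviation round_cand :: "('v set \<Rightarrow> real) \<Rightarrow> nat \<Rightarrow> 'v set set" where
  "round_cand c k \<equiv> cand R T (set (assigned c k))"

lemma round_cand_finite: "set (assigned c k) \<subseteq> T \<Longrightarrow> finite (round_cand c k)"
  using cand_subset_edges[OF _ robots_tasks_disjoint] finite_edges[of "R \<union> T"]
    finite_robots finite_tasks by (auto intro: finite_subset)

lemma round_cand_nonempty:
  assumes "distinct (assigned c k)" "k < card T"
  shows "round_cand c k \<noteq> {}"
proof -
  have "\<not> T \<subseteq> set (assigned c k)"
    using assms card_mono[of "set (assigned c k)" T]
    by (auto simp: distinct_card length_auction_st)
  then obtain t where "t \<in> T - set (assigned c k)" by blast
  moreover obtain r where "r \<in> R" using robots_nonempty by blast
  ultimately have "{r, t} \<in> round_cand c k" unfolding cand_def by blast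
  then show ?thesis by blast
qed

lemma auction_round:
  assumes "distinct (assigned c k)" "set (assigned c k) \<subseteq> T" "k < card T"
  obtains s t where "s \<in> R \<union> set (assigned c k)" "t \<in> T - set (assigned c k)"
    and "(ARG_MIN c f. f \<in> round_cand c k) = {s, t}"
    and "assigned c (Suc k) = assigned c k @ [t]"
proof -
  let ?w = "ARG_MIN c f. f \<in> round_cand c k"
  have "?w \<in> round_cand c k"
    using round_cand_nonempty[OF assms(1,3)] arg_min_if_finite(1)[OF round_cand_finite[OF assms(2)]]
    unfolding arg_min_on_def by blast
  then obtain s t where st: "?w = {s, t}" "s \<in> R \<union> set (assigned c k)" "t \<in> T - set (assigned c k)"
    unfolding cand_def by blast
  have "(THE t. t \<in> ?w \<and> t \<in> T - set (assigned c k)) = t"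
    using st robots_tasks_disjoint by (intro the_equality) auto
  with st that show ?thesis by (simp add: Let_def)
qed

lemma assigned_distinct_subset:
  "k \<le> card T \<Longrightarrow> distinct (assigned c k) \<and> set (assigned c k) \<subseteq> T"
proof (induction k)
  case 0
  then show ?case by simp
next
  case (Suc k)
  then have IH: "distinct (assigned c k)" "set (assigned c k) \<subseteq> T" and "k < card T" by auto
  then obtain t where "t \<in> T - set (assigned c k)" "assigned c (Suc k) = assigned c k @ [t]"
    by (rule auction_round)
  with IH show ?case by simp
qed

lemma assigned_take: "k \<le> card T \<Longrightarrow> assigned c k = take k (assigned c (card T))"
  using auction_st_take[of k "card T" c R T] by simp

lemma set_assigned_all: "set (assigned c (card T)) = T"
  using assigned_distinct_subset[of "card T" c] finite_tasks
  by (metis card_subset_eq distinct_card length_auction_st(2) order_refl)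

lemma auction_w_Suc:
  assumes "k < card T"
  shows "auction_w c R T (Suc k) = (ARG_MIN c f. f \<in> round_cand c k)"
proof -
  have "auction_w c R T (Suc k) = take (Suc k) (fst (auction_st c R T (card T))) ! k"
    unfolding auction_w_def auction_W_def by simp
  also have "\<dots> = fst (auction_st c R T (Suc k)) ! k"
    using auction_st_take[of "Suc k" "card T" c R T] assms by simp
  finally show ?thesis by (simp add: Let_def nth_append length_auction_st)
qed

lemma round_cand_finite_nonempty:
  "k < card T \<Longrightarrow> finite (round_cand c k) \<and> round_cand c k \<noteq> {}"
  using round_cand_finite round_cand_nonempty assigned_distinct_subset[of k c] by simp

lemma auction_w_mem_round_cand: "k < card T \<Longrightarrow> auction_w c R T (Suc k) \<in> round_cand c k"
  using arg_min_if_finite(1)[of "round_cand c k" c] round_cand_finite_nonempty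
  unfolding auction_w_Suc arg_min_on_def by simp

lemma auction_w_le_round_cand:
  "k < card T \<Longrightarrow> f \<in> round_cand c k \<Longrightarrow> c (auction_w c R T (Suc k)) \<le> c f"
  using arg_min_least[of "round_cand c k" f c] round_cand_finite_nonempty
  unfolding auction_w_Suc arg_min_on_def by simp

lemma auction_a_robot: "x \<in> R \<Longrightarrow> auction_a c R T x = 0"
  using set_assigned_all robots_tasks_disjoint unfolding auction_a_def by (auto simp: Let_def)

lemma auction_a_nth:
  assumes "j < card T"
  shows "auction_a c R T (assigned c (card T) ! j) = Suc j"
proof -
  let ?L = "assigned c (card T)"
  have "distinct ?L" "length ?L = card T"
    using assigned_distinct_subset[of "card T" c] by (simp_all add: length_auction_st)
  then have "(LEAST i. i < length ?L \<and> ?L ! i = ?L ! j) = j"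
    using assms by (intro Least_equality) (auto simp: nth_eq_iff_index_eq)
  then show ?thesis using assms \<open>length ?L = card T\<close> unfolding auction_a_def by (simp add: Let_def)
qed

lemma auction_a_le_iff_assigned:
  assumes "x \<in> T" "k \<le> card T"
  shows "auction_a c R T x \<le> k \<longleftrightarrow> x \<in> set (assigned c k)"
proof -
  let ?L = "assigned c (card T)"
  have L: "distinct ?L" "length ?L = card T"
    using assigned_distinct_subset[of "card T" c] by (simp_all add: length_auction_st)
  obtain j where j: "j < card T" "x = ?L ! j"
    using assms(1) set_assigned_all L(2) by (metis in_set_conv_nth)
  have "x \<in> set (take k ?L) \<longleftrightarrow> j < k"
  proof
    assume "x \<in> set (take k ?L)"
    then obtain i where "i < k" "i < card T" "?L ! i = x"
      using L(2) by (auto simp: in_set_conv_nth)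
    moreover have "i = j"
      using nth_eq_iff_index_eq[OF L(1), of i j] \<open>i < card T\<close> \<open>?L ! i = x\<close> j L(2) by simp
    ultimately show "j < k" by simp
  next
    assume "j < k"
    then show "x \<in> set (take k ?L)"
      using j L(2) by (auto simp: in_set_conv_nth intro!: exI[of _ j])
  qed
  then show ?thesis using j auction_a_nth assigned_take[OF assms(2)] by (simp add: Suc_le_eq)
qed

lemma auction_a_le_card: "auction_a c R T x \<le> card T"
proof (cases "x \<in> T")
  case True
  then show ?thesis using auction_a_le_iff_assigned set_assigned_all by simp
next
  case False
  then show ?thesis using set_assigned_all unfolding auction_a_def by (simp add: Let_def)
qed

lemma bid_rounds_auction_a_subset: "bid_rounds (auction_a c R T) f \<subseteq> {1..card T}"
  unfolding bid_rounds_def using auction_a_le_card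
  by (auto simp: max_def) (meson order.trans)+

lemma round_cand_bid_rounds:
  assumes "k < card T" "f \<in> round_cand c k"
  shows "Suc k \<in> bid_rounds (auction_a c R T) f"
proof -
  obtain s t where f: "f = {s, t}" "s \<in> R \<union> set (assigned c k)" "t \<in> T - set (assigned c k)"
    using assms(2) unfolding cand_def by blast
  have "set (assigned c k) \<subseteq> T" using assigned_distinct_subset assms(1) by simp
  then have "auction_a c R T s \<le> k"
    using f(2) auction_a_robot auction_a_le_iff_assigned assms(1) by fastforce
  moreover have "k < auction_a c R T t"
    using f(3) auction_a_le_iff_assigned assms(1) by (simp add: not_le[symmetric])
  ultimately show ?thesis unfolding bid_rounds_def using f(1) by fastforce
qed

lemma auction_w_Suc_auction_a:
  assumes "k < card T"
  obtains s t where "auction_w c R T (Suc k) = {s, t}"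
    and "auction_a c R T s \<le> k" and "auction_a c R T t = Suc k"
proof -
  have inv: "distinct (assigned c k)" "set (assigned c k) \<subseteq> T"
    using assigned_distinct_subset assms by simp_all
  then obtain s t where st: "s \<in> R \<union> set (assigned c k)" "t \<in> T - set (assigned c k)"
    "(ARG_MIN c f. f \<in> round_cand c k) = {s, t}" "assigned c (Suc k) = assigned c k @ [t]"
    using assms by (rule auction_round)
  have "auction_a c R T s \<le> k"
    using st(1) inv auction_a_robot auction_a_le_iff_assigned assms by fastforce
  moreover have "auction_a c R T t = Suc k"
    using st(2,4) auction_a_le_iff_assigned[of t k c] auction_a_le_iff_assigned[of t "Suc k" c] assms
    by simp
  ultimately show ?thesis using that st(3) auction_w_Suc[OF assms] by simp
qed

lemma Max_auction_a_auction_w: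
  assumes "k \<in> {1..card T}"
  shows "Max (auction_a c R T ` auction_w c R T k) = k"
proof -
  obtain k' where k': "k = Suc k'" "k' < card T" using assms by (cases k) auto
  then obtain s t where "auction_w c R T k = {s, t}"
    and "auction_a c R T s \<le> k'" and "auction_a c R T t = k"
    by (metis auction_w_Suc_auction_a)
  then show ?thesis using k'(1) by (simp add: max_def)
qed

lemma inj_on_auction_w: "inj_on (auction_w c R T) {1..card T}"
  by (intro inj_onI) (metis Max_auction_a_auction_w)

lemma auction_w_bid_rounds:
  assumes "k \<in> {1..card T}"
  shows "k \<in> bid_rounds (auction_a c R T) (auction_w c R T k)"
proof -
  obtain k' where "k = Suc k'" "k' < card T" using assms by (cases k) auto
  then show ?thesis using round_cand_bid_rounds auction_w_mem_round_cand by simp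
qed

lemma auction_w_mem_auction_W: "k \<in> {1..card T} \<Longrightarrow> auction_w c R T k \<in> set (auction_W c R T)"
  unfolding auction_w_def auction_W_def by (intro nth_mem) (auto simp: length_auction_st)

lemma round_cand_subset_edges: "k \<le> card T \<Longrightarrow> round_cand c k \<subseteq> edges (R \<union> T)"
  using cand_subset_edges[OF _ robots_tasks_disjoint] assigned_distinct_subset by blast

lemma assign_eq_if_winners_stay_minimal:
  assumes inj: "inj_on c' (edges (R \<union> T))"
    and minimal: "\<And>k f. k < card T \<Longrightarrow> f \<in> round_cand c k \<Longrightarrow>
      c' (auction_w c R T (Suc k)) \<le> c' f"
  shows "assign c' R T = assign c R T"
proof -
  have "auction_st c' R T k = auction_st c R T k" if "k \<le> card T" for k
    using that
  proof (induction k)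
    case 0
    show ?case by simp
  next
    case (Suc k)
    then have k: "k < card T" and IH: "auction_st c' R T k = auction_st c R T k" by simp_all
    have "inj_on c' {f. f \<in> round_cand c k}"
      using inj_on_subset[OF inj round_cand_subset_edges] k by simp
    then have "(ARG_MIN c' f. f \<in> round_cand c k) = auction_w c R T (Suc k)"
      using auction_w_mem_round_cand minimal k by (intro arg_min_inj_eq) auto
    then show ?case using IH auction_w_Suc[OF k] by (simp add: Let_def)
  qed
  then show ?thesis unfolding assign_def auction_W_def auction_a_def by simp
qed

lemma assign_eq_if_bids_preserved:
  assumes inj: "inj_on c' (edges (R \<union> T))"
    and same: "\<forall>f\<in>edges (R \<union> T). f \<noteq> e \<longrightarrow> c' f = c f"
    and winner: "\<And>k. k \<in> bid_rounds (auction_a c R T) e \<Longrightarrow> e = auction_w c R T k \<Longrightarrow>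
      c' e \<le> c (second_best c R T k)"
    and loser: "\<And>k. k \<in> bid_rounds (auction_a c R T) e \<Longrightarrow> e \<noteq> auction_w c R T k \<Longrightarrow>
      c (auction_w c R T k) \<le> c' e"
  shows "assign c' R T = assign c R T"
proof (rule assign_eq_if_winners_stay_minimal[OF inj])
  fix k f
  assume k: "k < card T" and f: "f \<in> round_cand c k"
  let ?w = "auction_w c R T (Suc k)"
  have w: "?w \<in> round_cand c k" using auction_w_mem_round_cand[OF k] .
  have edges: "?w \<in> edges (R \<union> T)" "f \<in> edges (R \<union> T)"
    using round_cand_subset_edges[of k c] k f w by auto
  have "c ?w \<le> c f" using auction_w_le_round_cand[OF k f] .
  show "c' ?w \<le> c' f"
  proof (cases "?w = e")
    case True
    show ?thesis
    proof (cases "f = e")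
      case False
      have "c' e \<le> c (second_best c R T (Suc k))"
        using round_cand_bid_rounds[OF k w] True by (intro winner) simp_all
      also have "\<dots> \<le> c f"
        using False True finite_robots finite_tasks
        by (intro second_best_le edges(2) round_cand_bid_rounds[OF k f]) auto
      also have "\<dots> = c' f" using False same edges(2) by simp
      finally show ?thesis using True by simp
    qed (use True in simp)
  next
    case False
    then have "c' ?w = c ?w" using same edges(1) by simp
    moreover have "c ?w \<le> c' f"
    proof (cases "f = e")
      case True
      then show ?thesis using loser[of "Suc k"] round_cand_bid_rounds[OF k f] False by simp
    next
      case False
      then show ?thesis using \<open>c ?w \<le> c f\<close> same edges(2) by simp
    qed
    ultimately show ?thesis by simp
  qed
qed

lemma assign_eq_if_loser_cost_raised:
  assumes "inj_on c' (edges (R \<union> T))" "\<forall>f\<in>edges (R \<union> T). f \<noteq> e \<longrightarrow> c' f = c f"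
    and loser: "e \<notin> set (auction_W c R T)"
    and raised: "\<forall>k\<in>bid_rounds (auction_a c R T) e. c (auction_w c R T k) < c' e"
  shows "assign c' R T = assign c R T"
proof (rule assign_eq_if_bids_preserved[OF assms(1,2)])
  fix k
  assume k: "k \<in> bid_rounds (auction_a c R T) e"
  then have "auction_w c R T k \<in> set (auction_W c R T)"
    using bid_rounds_auction_a_subset auction_w_mem_auction_W by blast
  then show "e = auction_w c R T k \<Longrightarrow> c' e \<le> c (second_best c R T k)" using loser by simp
  show "c (auction_w c R T k) \<le> c' e" using raised k by (simp add: less_imp_le)
qed

lemma assign_eq_if_winner_cost_within_bids:
  assumes "inj_on c' (edges (R \<union> T))" "\<forall>f\<in>edges (R \<union> T). f \<noteq> e \<longrightarrow> c' f = c f"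
    and K: "K \<in> {1..card T}" "e = auction_w c R T K"
    and below_second: "c' e < c (second_best c R T K)"
    and above_others: "\<forall>k\<in>bid_rounds (auction_a c R T) e - {K}. c (auction_w c R T k) < c' e"
  shows "assign c' R T = assign c R T"
proof (rule assign_eq_if_bids_preserved[OF assms(1,2)])
  fix k
  assume k: "k \<in> bid_rounds (auction_a c R T) e"
  then have k_range: "k \<in> {1..card T}" using bid_rounds_auction_a_subset by blast
  show "c' e \<le> c (second_best c R T k)" if "e = auction_w c R T k"
  proof -
    have "k = K" using inj_onD[OF inj_on_auction_w] K k_range that by metis
    then show ?thesis using below_second by simp
  qed
  show "c (auction_w c R T k) \<le> c' e" if "e \<noteq> auction_w c R T k"
    using that K(2) k above_others by (auto intro: less_imp_le)
qed

end

theorem corollary8: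
  fixes R T :: "'v set" and c c' :: "'v set \<Rightarrow> real" and e :: "'v set"
  assumes "finite R" and "finite T" and "R \<inter> T = {}" and "R \<noteq> {}"
    and "card (R \<union> T) \<ge> 3"
    and "\<forall>f\<in>edges (R \<union> T). 0 \<le> c f" and "\<forall>f\<in>edges (R \<union> T). 0 \<le> c' f"
    and "inj_on c (edges (R \<union> T))" and "inj_on c' (edges (R \<union> T))"
    and "e \<in> edges (R \<union> T)"
    and "\<forall>f\<in>edges (R \<union> T). f \<noteq> e \<longrightarrow> c' f = c f"
    and "(e \<notin> set (auction_W c R T) \<and>
          (\<forall>k\<in>bid_rounds (auction_a c R T) e. c (auction_w c R T k) < c' e))
       \<or> (\<exists>K\<in>{1..card T}. e = auction_w c R T K
            \<and> card (bid_rounds (auction_a c R T) e) = 1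
            \<and> c' e < c (second_best c R T K) \<and> 0 \<le> c' e)
       \<or> (\<exists>K\<in>{1..card T}. e = auction_w c R T K
            \<and> card (bid_rounds (auction_a c R T) e) > 1
            \<and> c' e < c (second_best c R T K)
            \<and> (\<forall>k\<in>bid_rounds (auction_a c R T) e - {K}. c (auction_w c R T k) < c' e))"
  shows "assign c' R T = assign c R T"
proof -
  interpret mrta R T using assms(1-4) by unfold_locales
  let ?B = "bid_rounds (auction_a c R T) e"
  from assms(12) show ?thesis
  proof (elim disjE bexE conjE)
    assume "e \<notin> set (auction_W c R T)" "\<forall>k\<in>?B. c (auction_w c R T k) < c' e"
    then show ?thesis by (rule assign_eq_if_loser_cost_raised[OF assms(9,11)])
  next
    fix K
    assume K: "K \<in> {1..card T}" "e = auction_w c R T K"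
      and "card ?B = 1" and "c' e < c (second_best c R T K)"
    moreover have "?B = {K}"
      using \<open>card ?B = 1\<close> auction_w_bid_rounds[OF K(1)] K(2) by (metis card_1_singletonE singletonD)
    ultimately show ?thesis using assign_eq_if_winner_cost_within_bids[OF assms(9,11)] by simp
  next
    fix K
    assume "K \<in> {1..card T}" "e = auction_w c R T K" "c' e < c (second_best c R T K)"
      "\<forall>k\<in>?B - {K}. c (auction_w c R T k) < c' e"
    then show ?thesis by (rule assign_eq_if_winner_cost_within_bids[OF assms(9,11)])
  qed
qed

end
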